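(* Let $2<p<\infty$ and $\alpha\in\mathbb R$, or $p=2$ and $\alpha\ge0$. There is $C>0$ such that for all $N\ge1$, $$\sup_{A\subset\mathbb Z,\ |A|\le N}\|S_A\|_{L^p(\log L)^\alpha\to L^p(\log L)^\alpha}\le C\,N^{\frac12-\frac1p}(\log(e+N))^\alpha.$$
   Context: On $\mathbb T\equiv[-\pi,\pi)$: $L^p(\log L)^\alpha(\mathbb T)$ is the Orlicz space $L^\Phi$, $\Phi(t)=\int_0^ts^{p-1}(\log(c+s))^{\alpha p}ds$ ($c>1$ fixed, large enough that $\Phi$ is a Young function), Luxemburg norm. For finite $A\subset\mathbb Z$, $S_A(g)=\sum_{n\in A}\hat g(n)e^{inx}$, where $\hat g(n)$ are the Fourier coefficients of $g\in L^1(\mathbb T)$. *)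

theory Defs
  imports "HOL-Analysis.Analysis"
begin

definition torus :: "real set" where
  "torus = {-pi..<pi}"

definition LlogL_Phi :: "real \<Rightarrow> real \<Rightarrow> real \<Rightarrow> real \<Rightarrow> real" where
  "LlogL_Phi p \<alpha> c t = integral {0..t} (\<lambda>s. s powr (p - 1) * (ln (c + s)) powr (\<alpha> * p))"

definition young_function :: "(real \<Rightarrow> real) \<Rightarrow> bool" where
  "young_function \<Phi> \<longleftrightarrow> convex_on {0..} \<Phi> \<and> \<Phi> 0 = 0 \<and> (\<forall>t>0. \<Phi> t > 0)
     \<and> filterlim \<Phi> at_top at_top"

definition orlicz_modular :: "(real \<Rightarrow> real) \<Rightarrow> (real \<Rightarrow> complex) \<Rightarrow> real \<Rightarrow> ennreal" where
  "orlicz_modular \<Phi> f lam = (\<integral>\<^sup>+ x. ennreal (\<Phi> (cmod (f x) / lam)) \<partial>(lebesgue_on torus))"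

definition orlicz_space :: "(real \<Rightarrow> real) \<Rightarrow> (real \<Rightarrow> complex) set" where
  "orlicz_space \<Phi> = {f. f \<in> borel_measurable (lebesgue_on torus) \<and>
      (\<exists>lam>0. orlicz_modular \<Phi> f lam < \<infinity>)}"

definition luxemburg_norm :: "(real \<Rightarrow> real) \<Rightarrow> (real \<Rightarrow> complex) \<Rightarrow> real" where
  "luxemburg_norm \<Phi> f = Inf {lam. lam > 0 \<and> orlicz_modular \<Phi> f lam \<le> 1}"

definition fourier_coeff :: "(real \<Rightarrow> complex) \<Rightarrow> int \<Rightarrow> complex" where
  "fourier_coeff g n = (1 / (2 * pi)) *
     (LINT x | lebesgue_on torus. g x * exp (- (\<i> * of_int n * of_real x)))"

definition fourier_proj :: "int set \<Rightarrow> (real \<Rightarrow> complex) \<Rightarrow> real \<Rightarrow> complex" where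
  "fourier_proj A g x = (\<Sum>n\<in>A. fourier_coeff g n * exp (\<i> * of_int n * of_real x))"

end

theory Submission
  imports Defs
begin

text \<open>
  Fix g and a level \<mu> > 0 at which the Luxemburg modular of g is at most 1. For p \<ge> 2 (and
  \<alpha> \<ge> 0 when p = 2) the Young function grows at least quadratically, \<Phi>(t) \<ge> a (t^2 - 4), so
  the L^2 norm of g is O(\<mu>). Bessel's inequality transfers this bound to S_A g, and
  Cauchy-Schwarz over the at most N frequencies gives the pointwise bound |S_A g| = O(sqrt(N) \<mu>).
  On the range [0, N^(1/p) log(e+N)^(-\<alpha>)] the function \<Phi> is dominated by the quadratic
  N^(1-2/p) log(e+N)^(2\<alpha>) v^2, so at the level C N^(1/2-1/p) log(e+N)^\<alpha> \<mu> the modular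
  of S_A g is controlled by its L^2 norm and is therefore at most 1.
\<close>

section \<open>Characters and Bessel's inequality on the torus\<close>

abbreviation torus_measure :: "real measure" where
  "torus_measure \<equiv> lebesgue_on torus"

lemma torus_in_sets_lebesgue [simp]: "torus \<in> sets lebesgue"
  unfolding torus_def by simp

lemma emeasure_torus_measure: "emeasure torus_measure torus = ennreal (2 * pi)"
  by (simp add: emeasure_restrict_space torus_def)

lemma finite_measure_torus_measure: "finite_measure torus_measure"
  by (rule finite_measureI) (simp add: emeasure_torus_measure)

lemma
  fixes f :: "real \<Rightarrow> complex"
  assumes "continuous_on {-pi..pi} f"
  shows integrable_torus_continuous: "integrable torus_measure f"
    and integral_torus_continuous: "(LINT x|torus_measure. f x) = integral {-pi..pi} f"
proof -
  have "integrable (lebesgue_on {-pi..pi}) f"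
    using assms by (rule continuous_imp_integrable_real)
  then have "set_integrable lebesgue {-pi..pi} f"
    by (simp add: integrable_restrict_space set_integrable_def)
  then have "set_integrable lebesgue torus f"
    by (rule set_integrable_subset) (auto simp: torus_def)
  then show i: "integrable torus_measure f"
    by (simp add: integrable_restrict_space set_integrable_def)
  have "(LINT x|torus_measure. f x) = integral torus f"
    by (rule lebesgue_integral_eq_integral[OF i]) simp
  also have "\<dots> = integral {-pi..pi} f"
    by (rule integral_spike_set) (auto simp: torus_def intro: negligible_subset[of "{pi}"])
  finally show "(LINT x|torus_measure. f x) = integral {-pi..pi} f" .
qed

definition fourier_char :: "int \<Rightarrow> real \<Rightarrow> complex" where
  "fourier_char n x = exp (\<i> * of_int n * of_real x)"

lemma continuous_on_fourier_char [continuous_intros]: "continuous_on S (fourier_char n)"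
  unfolding fourier_char_def by (intro continuous_intros)

lemma norm_fourier_char [simp]: "norm (fourier_char n x) = 1"
  unfolding fourier_char_def by simp

lemma cnj_fourier_char: "cnj (fourier_char n x) = fourier_char (- n) x"
  unfolding fourier_char_def by (simp add: exp_cnj)

lemma fourier_char_mult_cnj: "fourier_char n x * cnj (fourier_char m x) = fourier_char (n - m) x"
  unfolding fourier_char_def by (simp add: exp_cnj exp_add[symmetric] algebra_simps)

lemma fourier_char_pi: "fourier_char n pi = fourier_char n (- pi)"
proof -
  have "fourier_char n pi = exp (\<i> * of_int n * of_real (- pi) + \<i> * (of_int n * (of_real pi * 2)))"
    unfolding fourier_char_def by (simp add: algebra_simps)
  also have "\<dots> = fourier_char n (- pi)"
    unfolding fourier_char_def by (rule exp_plus_2pin)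
  finally show ?thesis .
qed

lemma integral_fourier_char: "integral {-pi..pi} (fourier_char n) = (if n = 0 then 2 * pi else 0)"
proof (cases "n = 0")
  case True
  then have "fourier_char n = (\<lambda>_. 1)" by (simp add: fourier_char_def fun_eq_iff)
  then show ?thesis using True by (simp add: scaleR_conv_of_real)
next
  case False
  have "(fourier_char n has_integral
          fourier_char n pi / (\<i> * of_int n) - fourier_char n (- pi) / (\<i> * of_int n)) {-pi..pi}"
  proof (rule fundamental_theorem_of_calculus)
    fix x :: real
    have "((\<lambda>z. exp (\<i> * of_int n * z) / (\<i> * of_int n)) has_field_derivative fourier_char n x)
            (at (of_real x))"
      unfolding fourier_char_def using False by (auto intro!: derivative_eq_intros simp: field_simps)
    from has_vector_derivative_real_field[OF this]
    show "((\<lambda>x. fourier_char n x / (\<i> * of_int n)) has_vector_derivative fourier_char n x)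
            (at x within {-pi..pi})"
      by (simp add: fourier_char_def)
  qed simp
  then show ?thesis using False by (simp add: fourier_char_pi integral_unique)
qed

lemma integrable_fourier_char [simp]: "integrable torus_measure (fourier_char n)"
  by (intro integrable_torus_continuous continuous_intros)

lemma fourier_char_measurable [measurable]: "fourier_char n \<in> borel_measurable torus_measure"
  by (rule borel_measurable_integrable) simp

lemma integral_torus_fourier_char:
  "(LINT x|torus_measure. fourier_char n x) = (if n = 0 then 2 * pi else 0)"
  by (simp add: integral_torus_continuous[OF continuous_on_fourier_char] integral_fourier_char)

lemma fourier_coeff_eq: "fourier_coeff g n = (LINT x|torus_measure. g x * cnj (fourier_char n x)) / (2 * pi)"
  unfolding fourier_coeff_def fourier_char_def by (simp add: exp_cnj)

lemma fourier_proj_eq: "fourier_proj A g x = (\<Sum>n\<in>A. fourier_coeff g n * fourier_char n x)"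
  unfolding fourier_proj_def fourier_char_def by simp

lemma
  fixes a :: "int \<Rightarrow> complex"
  assumes "finite A"
  shows integrable_norm_trig_poly_sq:
      "integrable torus_measure (\<lambda>x. (cmod (\<Sum>n\<in>A. a n * fourier_char n x))\<^sup>2)"
    and integral_norm_trig_poly_sq:
      "(LINT x|torus_measure. (cmod (\<Sum>n\<in>A. a n * fourier_char n x))\<^sup>2)
         = 2 * pi * (\<Sum>n\<in>A. (cmod (a n))\<^sup>2)"
proof -
  define P where "P x = (\<Sum>n\<in>A. a n * fourier_char n x)" for x
  have expand: "complex_of_real ((cmod (P x))\<^sup>2)
      = (\<Sum>n\<in>A. \<Sum>m\<in>A. a n * cnj (a m) * fourier_char (n - m) x)" for x
  proof -
    have "complex_of_real ((cmod (P x))\<^sup>2) = P x * cnj (P x)"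
      by (rule complex_norm_square)
    also have "\<dots> = (\<Sum>n\<in>A. \<Sum>m\<in>A. a n * cnj (a m) * fourier_char (n - m) x)"
      unfolding P_def cnj_sum sum_product
      by (intro sum.cong refl) (simp add: fourier_char_mult_cnj[symmetric] mult_ac)
    finally show ?thesis .
  qed
  have "complex_integrable torus_measure (\<lambda>x. complex_of_real ((cmod (P x))\<^sup>2))"
    unfolding expand by simp
  then show "integrable torus_measure (\<lambda>x. (cmod (\<Sum>n\<in>A. a n * fourier_char n x))\<^sup>2)"
    unfolding P_def complex_of_real_integrable_eq .
  have "complex_of_real (LINT x|torus_measure. (cmod (P x))\<^sup>2)
      = (LINT x|torus_measure. complex_of_real ((cmod (P x))\<^sup>2))"
    by (rule integral_complex_of_real[symmetric])
  also have "\<dots> = (\<Sum>n\<in>A. \<Sum>m\<in>A. a n * cnj (a m) * (if n - m = 0 then 2 * pi else 0))"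
    unfolding expand by (simp add: integral_torus_fourier_char)
  also have "\<dots> = (\<Sum>n\<in>A. of_real (2 * pi) * (a n * cnj (a n)))"
    using assms by (simp add: if_distrib mult_ac cong: if_cong)
  also have "\<dots> = complex_of_real (2 * pi * (\<Sum>n\<in>A. (cmod (a n))\<^sup>2))"
    by (simp add: complex_norm_square[symmetric] sum_distrib_left del: of_real_power)
  finally show "(LINT x|torus_measure. (cmod (\<Sum>n\<in>A. a n * fourier_char n x))\<^sup>2)
      = 2 * pi * (\<Sum>n\<in>A. (cmod (a n))\<^sup>2)"
    unfolding P_def of_real_eq_iff .
qed

lemma integral_mult_cnj_trig_poly:
  fixes g :: "real \<Rightarrow> complex"
  assumes "integrable torus_measure g" "g \<in> borel_measurable torus_measure"
  shows "integrable torus_measure (\<lambda>x. g x * cnj (\<Sum>n\<in>A. b n * fourier_char n x))"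
    and "(LINT x|torus_measure. g x * cnj (\<Sum>n\<in>A. b n * fourier_char n x))
           = 2 * pi * (\<Sum>n\<in>A. cnj (b n) * fourier_coeff g n)"
proof -
  have g_char: "integrable torus_measure (\<lambda>x. g x * cnj (fourier_char n x))" for n
    by (rule Bochner_Integration.integrable_bound[OF assms(1)])
       (simp_all add: cnj_fourier_char norm_mult borel_measurable_times assms(2))
  have expand: "g x * cnj (\<Sum>n\<in>A. b n * fourier_char n x)
      = (\<Sum>n\<in>A. cnj (b n) * (g x * cnj (fourier_char n x)))" for x
    by (simp add: sum_distrib_left mult_ac)
  show "integrable torus_measure (\<lambda>x. g x * cnj (\<Sum>n\<in>A. b n * fourier_char n x))"
    unfolding expand using g_char by simp
  show "(LINT x|torus_measure. g x * cnj (\<Sum>n\<in>A. b n * fourier_char n x))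
      = 2 * pi * (\<Sum>n\<in>A. cnj (b n) * fourier_coeff g n)"
  proof -
    have "(LINT x|torus_measure. (\<Sum>n\<in>A. cnj (b n) * (g x * cnj (fourier_char n x))))
        = (\<Sum>n\<in>A. cnj (b n) * (LINT x|torus_measure. g x * cnj (fourier_char n x)))"
      using g_char by (simp add: Bochner_Integration.integral_sum)
    then show ?thesis
      unfolding expand by (simp add: fourier_coeff_eq sum_distrib_left mult_ac)
  qed
qed

lemma bessel_inequality:
  fixes g :: "real \<Rightarrow> complex"
  assumes meas: "g \<in> borel_measurable torus_measure"
    and sq: "integrable torus_measure (\<lambda>x. (cmod (g x))\<^sup>2)"
    and "finite A"
  shows "2 * pi * (\<Sum>n\<in>A. (cmod (fourier_coeff g n))\<^sup>2) \<le> (LINT x|torus_measure. (cmod (g x))\<^sup>2)"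
proof -
  define s where "s = (\<Sum>n\<in>A. (cmod (fourier_coeff g n))\<^sup>2)"
  define P where "P x = (\<Sum>n\<in>A. fourier_coeff g n * fourier_char n x)" for x
  have g: "integrable torus_measure g"
  proof (rule finite_measure.square_integrable_imp_integrable[OF finite_measure_torus_measure meas])
    show "integrable torus_measure (\<lambda>x. g x ^ 2)"
      using sq meas by (subst integrable_norm_iff[symmetric]) (auto simp: norm_power)
  qed
  have gP: "integrable torus_measure (\<lambda>x. g x * cnj (P x))"
    unfolding P_def using g meas by (rule integral_mult_cnj_trig_poly)
  have "(LINT x|torus_measure. g x * cnj (P x)) = 2 * pi * (\<Sum>n\<in>A. cnj (fourier_coeff g n) * fourier_coeff g n)"
    unfolding P_def using g meas by (rule integral_mult_cnj_trig_poly)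
  also have "\<dots> = complex_of_real (2 * pi * s)"
    by (simp add: s_def complex_norm_square mult.commute del: of_real_power)
  finally have int_gP: "(LINT x|torus_measure. g x * cnj (P x)) = complex_of_real (2 * pi * s)" .
  have P: "integrable torus_measure (\<lambda>x. (cmod (P x))\<^sup>2)"
    "(LINT x|torus_measure. (cmod (P x))\<^sup>2) = 2 * pi * s"
    unfolding P_def s_def using \<open>finite A\<close>
    by (rule integrable_norm_trig_poly_sq, rule integral_norm_trig_poly_sq)
  have norm_diff_sq: "(cmod (a - b))\<^sup>2 = (cmod a)\<^sup>2 + (cmod b)\<^sup>2 - 2 * Re (a * cnj b)" for a b
    unfolding cmod_power2 by (simp add: power2_eq_square algebra_simps)
  have "0 \<le> (LINT x|torus_measure. (cmod (g x - P x))\<^sup>2)"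
    by simp
  also have "\<dots> = (LINT x|torus_measure. (cmod (g x))\<^sup>2 + (cmod (P x))\<^sup>2 - 2 * Re (g x * cnj (P x)))"
    by (simp only: norm_diff_sq)
  also have "\<dots> = (LINT x|torus_measure. (cmod (g x))\<^sup>2 + (cmod (P x))\<^sup>2)
      - (LINT x|torus_measure. 2 * Re (g x * cnj (P x)))"
    by (intro Bochner_Integration.integral_diff Bochner_Integration.integrable_add
        integrable_mult_right integrable_Re sq P(1) gP)
  also have "\<dots> = (LINT x|torus_measure. (cmod (g x))\<^sup>2) + 2 * pi * s - 2 * Re (2 * pi * s)"
    by (simp only: Bochner_Integration.integral_add[OF sq P(1)] P(2) integral_mult_right_zero
        integral_Re[OF gP] int_gP)
  finally show ?thesis
    by (simp add: s_def)
qed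

lemma norm_trig_poly_le:
  shows "cmod (\<Sum>n\<in>A. a n * fourier_char n x) \<le> sqrt (real (card A) * (\<Sum>n\<in>A. (cmod (a n))\<^sup>2))"
proof (rule real_le_rsqrt)
  have "cmod (\<Sum>n\<in>A. a n * fourier_char n x) \<le> (\<Sum>n\<in>A. cmod (a n))"
    by (rule order_trans[OF norm_sum]) (simp add: norm_mult)
  then have "(cmod (\<Sum>n\<in>A. a n * fourier_char n x))\<^sup>2 \<le> (\<Sum>n\<in>A. cmod (a n))\<^sup>2"
    by (simp add: power_mono)
  also have "\<dots> \<le> real (card A) * (\<Sum>n\<in>A. (cmod (a n))\<^sup>2)"
    using sum_squared_le_sum_of_squares[of "\<lambda>n. cmod (a n)" A] by (simp add: mult.commute)
  finally show "(cmod (\<Sum>n\<in>A. a n * fourier_char n x))\<^sup>2 \<le> real (card A) * (\<Sum>n\<in>A. (cmod (a n))\<^sup>2)" .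
qed

lemma
  fixes g :: "real \<Rightarrow> complex"
  assumes "g \<in> borel_measurable torus_measure"
    and "integrable torus_measure (\<lambda>x. (cmod (g x))\<^sup>2)" and "finite A"
  shows integrable_norm_fourier_proj_sq: "integrable torus_measure (\<lambda>x. (cmod (fourier_proj A g x))\<^sup>2)"
    and integral_norm_fourier_proj_sq_le:
      "(LINT x|torus_measure. (cmod (fourier_proj A g x))\<^sup>2) \<le> (LINT x|torus_measure. (cmod (g x))\<^sup>2)"
    and norm_fourier_proj_le:
      "cmod (fourier_proj A g x) \<le> sqrt (real (card A) * (LINT x|torus_measure. (cmod (g x))\<^sup>2) / (2 * pi))"
proof -
  define s where "s = (\<Sum>n\<in>A. (cmod (fourier_coeff g n))\<^sup>2)"
  have bessel: "2 * pi * s \<le> (LINT x|torus_measure. (cmod (g x))\<^sup>2)"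
    unfolding s_def using assms by (rule bessel_inequality)
  show "integrable torus_measure (\<lambda>x. (cmod (fourier_proj A g x))\<^sup>2)"
    unfolding fourier_proj_eq using \<open>finite A\<close> by (rule integrable_norm_trig_poly_sq)
  show "(LINT x|torus_measure. (cmod (fourier_proj A g x))\<^sup>2) \<le> (LINT x|torus_measure. (cmod (g x))\<^sup>2)"
    unfolding fourier_proj_eq integral_norm_trig_poly_sq[OF \<open>finite A\<close>] using bessel by (simp add: s_def)
  have "cmod (fourier_proj A g x) \<le> sqrt (real (card A) * s)"
    unfolding fourier_proj_eq s_def by (rule norm_trig_poly_le)
  also have "\<dots> \<le> sqrt (real (card A) * (LINT x|torus_measure. (cmod (g x))\<^sup>2) / (2 * pi))"
  proof -
    have "s \<le> (LINT x|torus_measure. (cmod (g x))\<^sup>2) / (2 * pi)"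
      using bessel by (simp add: field_simps)
    then show ?thesis
      by (simp add: mult_left_mono flip: times_divide_eq_right)
  qed
  finally show "cmod (fourier_proj A g x) \<le> sqrt (real (card A) * (LINT x|torus_measure. (cmod (g x))\<^sup>2) / (2 * pi))" .
qed

section \<open>Young functions and the Luxemburg norm\<close>

lemma young_function_nonneg: "young_function \<Phi> \<Longrightarrow> 0 \<le> t \<Longrightarrow> 0 \<le> \<Phi> t"
  unfolding young_function_def by (cases "t = 0") (auto simp: less_imp_le)

lemma young_function_divide_le:
  assumes "young_function \<Phi>" "0 \<le> t" "1 \<le> k"
  shows "\<Phi> (t / k) \<le> \<Phi> t / k"
proof -
  have "convex_on {0..} \<Phi>" "\<Phi> 0 = 0"
    using assms(1) by (auto simp: young_function_def)
  then have "\<Phi> ((1 - 1 / k) *\<^sub>R 0 + (1 / k) *\<^sub>R t) \<le> (1 - 1 / k) * \<Phi> 0 + (1 / k) * \<Phi> t"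
    by (intro convex_onD) (use assms in auto)
  with \<open>\<Phi> 0 = 0\<close> show ?thesis
    by simp
qed

lemma young_function_mono:
  assumes "young_function \<Phi>" "0 \<le> s" "s \<le> t"
  shows "\<Phi> s \<le> \<Phi> t"
proof (cases "s = 0")
  case True
  then show ?thesis
    using assms young_function_def young_function_nonneg by auto
next
  case False
  then have "\<Phi> (t / (t / s)) \<le> \<Phi> t / (t / s)"
    using assms by (intro young_function_divide_le) auto
  also have "\<dots> = (s / t) * \<Phi> t"
    by simp
  also have "\<dots> \<le> \<Phi> t"
    using assms False young_function_nonneg[OF assms(1), of t]
    by (intro mult_left_le_one_le) auto
  finally show ?thesis
    using False assms by (simp split: if_splits)
qed

lemma measurable_young_function_comp:
  assumes "young_function \<Phi>" "f \<in> borel_measurable M" "\<And>x. 0 \<le> f x"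
  shows "(\<lambda>x. \<Phi> (f x)) \<in> borel_measurable M"
proof -
  have "mono (\<lambda>t. \<Phi> (max 0 t))"
    by (rule monoI) (simp add: young_function_mono[OF assms(1)])
  then have "(\<lambda>t. \<Phi> (max 0 t)) \<in> borel_measurable borel"
    by (rule borel_measurable_mono)
  from measurable_compose[OF assms(2) this] show ?thesis
    using assms(3) by (simp add: max_absorb2)
qed

lemma measurable_modular_integrand:
  assumes "young_function \<Phi>" "g \<in> borel_measurable M" "0 < \<mu>"
  shows "(\<lambda>x. ennreal (\<Phi> (cmod (g x) / \<mu>))) \<in> borel_measurable M"
proof -
  have "(\<lambda>x. cmod (g x) / \<mu>) \<in> borel_measurable M"
    using assms(2) by measurable
  from measurable_young_function_comp[OF assms(1) this]
  have "(\<lambda>x. \<Phi> (cmod (g x) / \<mu>)) \<in> borel_measurable M"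
    using assms(3) by simp
  then show ?thesis
    by (rule measurable_compose[OF _ measurable_ennreal])
qed

lemma luxemburg_norm_le:
  assumes "0 < \<mu>" "orlicz_modular \<Phi> f \<mu> \<le> 1"
  shows "luxemburg_norm \<Phi> f \<le> \<mu>"
  unfolding luxemburg_norm_def
  by (rule cInf_lower) (use assms in \<open>auto intro: bdd_belowI[of _ 0]\<close>)

lemma orlicz_space_modular_le_1:
  assumes young: "young_function \<Phi>" and g: "g \<in> orlicz_space \<Phi>"
  obtains \<mu> where "0 < \<mu>" "orlicz_modular \<Phi> g \<mu> \<le> 1"
proof -
  obtain \<mu> where \<mu>: "0 < \<mu>" "orlicz_modular \<Phi> g \<mu> < \<infinity>"
    using g by (auto simp: orlicz_space_def)
  define R where "R = enn2real (orlicz_modular \<Phi> g \<mu>)"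
  have R: "orlicz_modular \<Phi> g \<mu> = ennreal R" "0 \<le> R"
    using \<mu> by (auto simp: R_def)
  define k where "k = max 1 R"
  have k: "1 \<le> k" "R \<le> k"
    by (auto simp: k_def)
  have meas: "(\<lambda>x. ennreal (\<Phi> (cmod (g x) / \<mu>))) \<in> borel_measurable torus_measure"
    using young g \<open>0 < \<mu>\<close> by (intro measurable_modular_integrand) (auto simp: orlicz_space_def)
  have "orlicz_modular \<Phi> g (k * \<mu>) = (\<integral>\<^sup>+ x. ennreal (\<Phi> (cmod (g x) / \<mu> / k)) \<partial>torus_measure)"
    unfolding orlicz_modular_def by (simp add: mult.commute)
  also have "\<dots> \<le> (\<integral>\<^sup>+ x. ennreal (1 / k) * ennreal (\<Phi> (cmod (g x) / \<mu>)) \<partial>torus_measure)"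
  proof (rule nn_integral_mono)
    fix x
    have "\<Phi> (cmod (g x) / \<mu> / k) \<le> \<Phi> (cmod (g x) / \<mu>) / k"
      using \<open>0 < \<mu>\<close> k(1) by (intro young_function_divide_le[OF young]) auto
    moreover have "0 \<le> \<Phi> (cmod (g x) / \<mu>)"
      using \<open>0 < \<mu>\<close> by (intro young_function_nonneg[OF young]) auto
    ultimately show "ennreal (\<Phi> (cmod (g x) / \<mu> / k)) \<le> ennreal (1 / k) * ennreal (\<Phi> (cmod (g x) / \<mu>))"
      using k(1) by (simp add: ennreal_mult[symmetric] ennreal_leI)
  qed
  also have "\<dots> = ennreal (1 / k) * orlicz_modular \<Phi> g \<mu>"
    unfolding orlicz_modular_def using meas by (rule nn_integral_cmult)
  also have "\<dots> = ennreal (R / k)"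
    using R k by (simp add: ennreal_mult[symmetric])
  also have "\<dots> \<le> 1"
    using k by simp
  finally show ?thesis
    using k \<open>0 < \<mu>\<close> by (intro that[of "k * \<mu>"]) auto
qed

lemma luxemburg_norm_le_mult:
  assumes young: "young_function \<Phi>" and g: "g \<in> orlicz_space \<Phi>" and "0 < B"
    and le: "\<And>\<mu>. 0 < \<mu> \<Longrightarrow> orlicz_modular \<Phi> g \<mu> \<le> 1 \<Longrightarrow> luxemburg_norm \<Psi> f \<le> B * \<mu>"
  shows "luxemburg_norm \<Psi> f \<le> B * luxemburg_norm \<Phi> g"
proof -
  have "luxemburg_norm \<Psi> f / B \<le> luxemburg_norm \<Phi> g"
    unfolding luxemburg_norm_def[of \<Phi>]
  proof (rule cInf_greatest)
    show "{\<mu>. 0 < \<mu> \<and> orlicz_modular \<Phi> g \<mu> \<le> 1} \<noteq> {}"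
      using orlicz_space_modular_le_1[OF young g] by blast
  next
    fix \<mu> assume "\<mu> \<in> {\<mu>. 0 < \<mu> \<and> orlicz_modular \<Phi> g \<mu> \<le> 1}"
    then have "luxemburg_norm \<Psi> f \<le> B * \<mu>"
      using le by blast
    then show "luxemburg_norm \<Psi> f / B \<le> \<mu>"
      using \<open>0 < B\<close> by (simp add: divide_le_eq mult.commute)
  qed
  with \<open>0 < B\<close> show ?thesis
    by (simp add: divide_le_eq mult.commute)
qed

section \<open>Fourier projections on Orlicz spaces\<close>

lemma
  fixes g :: "real \<Rightarrow> complex"
  assumes young: "young_function \<Phi>" and "0 < a" and quadratic: "\<And>t. 0 \<le> t \<Longrightarrow> a * (t\<^sup>2 - 4) \<le> \<Phi> t"
    and meas: "g \<in> borel_measurable torus_measure"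
    and "0 < \<mu>" and modular: "orlicz_modular \<Phi> g \<mu> \<le> 1"
  shows integrable_norm_sq_if_modular_le_1: "integrable torus_measure (\<lambda>x. (cmod (g x))\<^sup>2)"
    and integral_norm_sq_le_if_modular_le_1:
      "(LINT x|torus_measure. (cmod (g x))\<^sup>2) \<le> (1 / a + 8 * pi) * \<mu>\<^sup>2"
proof -
  have pointwise: "(cmod (g x))\<^sup>2 \<le> \<mu>\<^sup>2 / a * \<Phi> (cmod (g x) / \<mu>) + 4 * \<mu>\<^sup>2" for x
  proof -
    have "a * ((cmod (g x) / \<mu>)\<^sup>2 - 4) \<le> \<Phi> (cmod (g x) / \<mu>)"
      using \<open>0 < \<mu>\<close> by (intro quadratic) simp
    then show ?thesis
      using \<open>0 < a\<close> \<open>0 < \<mu>\<close> by (simp add: field_simps power2_eq_square)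
  qed
  have "(\<integral>\<^sup>+ x. ennreal ((cmod (g x))\<^sup>2) \<partial>torus_measure)
      \<le> (\<integral>\<^sup>+ x. ennreal (\<mu>\<^sup>2 / a) * ennreal (\<Phi> (cmod (g x) / \<mu>)) + ennreal (4 * \<mu>\<^sup>2) \<partial>torus_measure)"
  proof (rule nn_integral_mono)
    fix x
    have "0 \<le> \<Phi> (cmod (g x) / \<mu>)"
      using \<open>0 < \<mu>\<close> by (intro young_function_nonneg[OF young]) simp
    with pointwise[of x] \<open>0 < a\<close> show "ennreal ((cmod (g x))\<^sup>2)
        \<le> ennreal (\<mu>\<^sup>2 / a) * ennreal (\<Phi> (cmod (g x) / \<mu>)) + ennreal (4 * \<mu>\<^sup>2)"
      by (simp add: ennreal_mult[symmetric] ennreal_plus[symmetric] del: ennreal_plus)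
  qed
  also have "\<dots> = ennreal (\<mu>\<^sup>2 / a) * orlicz_modular \<Phi> g \<mu> + ennreal (4 * \<mu>\<^sup>2) * ennreal (2 * pi)"
    using measurable_modular_integrand[OF young meas \<open>0 < \<mu>\<close>]
    by (simp add: orlicz_modular_def nn_integral_add nn_integral_cmult emeasure_torus_measure)
  also have "\<dots> \<le> ennreal (\<mu>\<^sup>2 / a) * 1 + ennreal (4 * \<mu>\<^sup>2) * ennreal (2 * pi)"
    by (intro add_mono mult_left_mono modular) auto
  also have "\<dots> = ennreal ((1 / a + 8 * pi) * \<mu>\<^sup>2)"
    using \<open>0 < a\<close> by (simp add: ennreal_mult[symmetric] ennreal_plus[symmetric] field_simps del: ennreal_plus)
  finally have bound: "(\<integral>\<^sup>+ x. ennreal ((cmod (g x))\<^sup>2) \<partial>torus_measure) \<le> ennreal ((1 / a + 8 * pi) * \<mu>\<^sup>2)" .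
  show integrable: "integrable torus_measure (\<lambda>x. (cmod (g x))\<^sup>2)"
    using meas bound by (intro integrableI_bounded) (auto simp: top.not_eq_extremum le_less_trans)
  have "ennreal (LINT x|torus_measure. (cmod (g x))\<^sup>2) \<le> ennreal ((1 / a + 8 * pi) * \<mu>\<^sup>2)"
    using bound by (simp add: nn_integral_eq_integral[OF integrable])
  then show "(LINT x|torus_measure. (cmod (g x))\<^sup>2) \<le> (1 / a + 8 * pi) * \<mu>\<^sup>2"
    using \<open>0 < a\<close> by (subst (asm) ennreal_le_iff) auto
qed

lemma orlicz_modular_le_integral_norm_sq:
  fixes f :: "real \<Rightarrow> complex"
  assumes "\<And>x. \<Phi> (cmod (f x) / \<mu>) \<le> R * (cmod (f x))\<^sup>2" "0 \<le> R"
    and "integrable torus_measure (\<lambda>x. (cmod (f x))\<^sup>2)"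
  shows "orlicz_modular \<Phi> f \<mu> \<le> ennreal (R * (LINT x|torus_measure. (cmod (f x))\<^sup>2))"
proof -
  have "orlicz_modular \<Phi> f \<mu> \<le> (\<integral>\<^sup>+ x. ennreal (R * (cmod (f x))\<^sup>2) \<partial>torus_measure)"
    unfolding orlicz_modular_def by (intro nn_integral_mono ennreal_leI assms(1))
  also have "\<dots> = ennreal (LINT x|torus_measure. R * (cmod (f x))\<^sup>2)"
    using assms(2,3) by (intro nn_integral_eq_integral) auto
  finally show ?thesis
    by simp
qed

lemma norm_fourier_proj_le_if_modular_le_1:
  fixes g :: "real \<Rightarrow> complex" and N :: nat and a K :: real
  defines "K \<equiv> 1 / a + 8 * pi"
  assumes "young_function \<Phi>" "0 < a" "\<And>t. 0 \<le> t \<Longrightarrow> a * (t\<^sup>2 - 4) \<le> \<Phi> t"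
    and meas: "g \<in> borel_measurable torus_measure" and "0 < \<mu>" "orlicz_modular \<Phi> g \<mu> \<le> 1"
    and "finite A" "card A \<le> N"
  shows "cmod (fourier_proj A g y) \<le> sqrt (real N * K) * \<mu>"
proof -
  have g_sq: "integrable torus_measure (\<lambda>x. (cmod (g x))\<^sup>2)"
    by (rule integrable_norm_sq_if_modular_le_1) fact+
  have "(LINT x|torus_measure. (cmod (g x))\<^sup>2) \<le> K * \<mu>\<^sup>2"
    unfolding K_def by (rule integral_norm_sq_le_if_modular_le_1) fact+
  then have "cmod (fourier_proj A g y) \<le> sqrt (real (card A) * (K * \<mu>\<^sup>2) / (2 * pi))"
    by (intro order_trans[OF norm_fourier_proj_le[OF meas g_sq \<open>finite A\<close>]]
        real_sqrt_le_mono divide_right_mono mult_left_mono) auto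
  also have "\<dots> \<le> sqrt (real N * (K * \<mu>\<^sup>2))"
  proof (rule real_sqrt_le_mono)
    have "0 < K"
      using \<open>0 < a\<close> by (simp add: K_def add_pos_pos)
    then have "real (card A) * (K * \<mu>\<^sup>2) / (2 * pi) \<le> real (card A) * (K * \<mu>\<^sup>2) / 1"
      using pi_ge_two by (intro divide_left_mono) auto
    also have "\<dots> \<le> real N * (K * \<mu>\<^sup>2)"
      using \<open>card A \<le> N\<close> \<open>0 < K\<close> by (simp add: mult_right_mono)
    finally show "real (card A) * (K * \<mu>\<^sup>2) / (2 * pi) \<le> real N * (K * \<mu>\<^sup>2)" .
  qed
  also have "\<dots> = sqrt (real N * K) * \<mu>"
    using \<open>0 < \<mu>\<close> by (simp add: real_sqrt_mult)
  finally show ?thesis .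
qed

lemma luxemburg_norm_fourier_proj_le:
  fixes g :: "real \<Rightarrow> complex" and N :: nat and a K :: real
  defines "K \<equiv> 1 / a + 8 * pi"
  assumes young: "young_function \<Phi>" and "0 < a" and quadratic: "\<And>t. 0 \<le> t \<Longrightarrow> a * (t\<^sup>2 - 4) \<le> \<Phi> t"
    and "finite A" "card A \<le> N" "0 < B" "0 \<le> R"
    and small: "\<And>v. 0 \<le> v \<Longrightarrow> v \<le> \<sigma> \<Longrightarrow> \<Phi> v \<le> R * v\<^sup>2"
    and "sqrt (real N * K) \<le> B * \<sigma>" "R * K \<le> B\<^sup>2"
    and g: "g \<in> orlicz_space \<Phi>"
  shows "luxemburg_norm \<Phi> (fourier_proj A g) \<le> B * luxemburg_norm \<Phi> g"
proof (rule luxemburg_norm_le_mult[OF young g \<open>0 < B\<close>])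
  fix \<mu> :: real assume "0 < \<mu>" "orlicz_modular \<Phi> g \<mu> \<le> 1"
  have meas: "g \<in> borel_measurable torus_measure"
    using g by (simp add: orlicz_space_def)
  have "0 < K"
    using \<open>0 < a\<close> by (simp add: K_def add_pos_pos)
  have g_sq: "integrable torus_measure (\<lambda>x. (cmod (g x))\<^sup>2)"
    by (rule integrable_norm_sq_if_modular_le_1) fact+
  have g_L2: "(LINT x|torus_measure. (cmod (g x))\<^sup>2) \<le> K * \<mu>\<^sup>2"
    unfolding K_def by (rule integral_norm_sq_le_if_modular_le_1) fact+
  have "\<Phi> (cmod (fourier_proj A g y) / (B * \<mu>)) \<le> 1 / (K * \<mu>\<^sup>2) * (cmod (fourier_proj A g y))\<^sup>2" for y
  proof -
    have "cmod (fourier_proj A g y) \<le> B * \<sigma> * \<mu>"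
      using norm_fourier_proj_le_if_modular_le_1[OF young \<open>0 < a\<close> quadratic meas \<open>0 < \<mu>\<close>
          \<open>orlicz_modular \<Phi> g \<mu> \<le> 1\<close> \<open>finite A\<close> \<open>card A \<le> N\<close>, of y]
        \<open>sqrt (real N * K) \<le> B * \<sigma>\<close> \<open>0 < \<mu>\<close>
      by (simp add: K_def order_trans[OF _ mult_right_mono])
    then have "\<Phi> (cmod (fourier_proj A g y) / (B * \<mu>)) \<le> R * (cmod (fourier_proj A g y) / (B * \<mu>))\<^sup>2"
      using \<open>0 < B\<close> \<open>0 < \<mu>\<close> by (intro small) (auto simp: field_simps)
    also have "\<dots> \<le> B\<^sup>2 / K * (cmod (fourier_proj A g y) / (B * \<mu>))\<^sup>2"
      using \<open>R * K \<le> B\<^sup>2\<close> \<open>0 < K\<close> by (intro mult_right_mono) (auto simp: field_simps)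
    finally show ?thesis
      using \<open>0 < B\<close> by (simp add: power_divide power_mult_distrib)
  qed
  then have "orlicz_modular \<Phi> (fourier_proj A g) (B * \<mu>)
      \<le> ennreal (1 / (K * \<mu>\<^sup>2) * (LINT x|torus_measure. (cmod (fourier_proj A g x))\<^sup>2))"
    using \<open>0 < K\<close> by (intro orlicz_modular_le_integral_norm_sq integrable_norm_fourier_proj_sq meas g_sq \<open>finite A\<close>) auto
  also have "\<dots> \<le> 1"
    using integral_norm_fourier_proj_sq_le[OF meas g_sq \<open>finite A\<close>] g_L2 \<open>0 < K\<close> \<open>0 < \<mu>\<close>
    by (simp add: field_simps)
  finally show "luxemburg_norm \<Phi> (fourier_proj A g) \<le> B * \<mu>"
    using \<open>0 < B\<close> \<open>0 < \<mu>\<close> by (intro luxemburg_norm_le) auto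
qed

section \<open>Powers against logarithms\<close>

lemma ln_exp1_plus_ge_1: "0 \<le> (x::real) \<Longrightarrow> 1 \<le> ln (exp 1 + x)"
  by (subst ln_ge_iff) (auto intro: add_pos_nonneg)

lemma ln_exp1_plus_powr_le:
  fixes y q :: real
  assumes "1 \<le> y" "0 \<le> q"
  shows "ln (exp 1 + y powr q) \<le> (ln (1 + exp 1) + q) * ln (exp 1 + y)"
proof -
  have "1 \<le> y powr q"
    using assms by (intro ge_one_powr_ge_zero)
  then have "exp 1 + y powr q \<le> (1 + exp 1) * y powr q"
    by (simp add: algebra_simps mult_left_mono[of 1, simplified])
  then have "ln (exp 1 + y powr q) \<le> ln ((1 + exp 1) * y powr q)"
    using \<open>1 \<le> y powr q\<close> by (intro ln_mono) (auto intro: add_pos_nonneg)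
  also have "\<dots> = ln (1 + exp 1) + q * ln y"
    using assms add_pos_pos[OF zero_less_one exp_gt_zero[of 1]] by (simp add: ln_mult)
  also have "\<dots> \<le> ln (1 + exp 1) * ln (exp 1 + y) + q * ln (exp 1 + y)"
  proof (intro add_mono mult_left_mono)
    show "ln (1 + exp 1) \<le> ln (1 + exp 1) * ln (exp 1 + y)"
    proof -
      have "0 \<le> ln (1 + exp (1::real))"
        by (rule ln_ge_zero) simp
      then show ?thesis
        using mult_left_mono[OF ln_exp1_plus_ge_1[of y]] assms by simp
    qed
    show "ln y \<le> ln (exp 1 + y)"
      using assms by (intro ln_mono) auto
  qed (fact assms(2))
  finally show ?thesis
    by (simp add: algebra_simps)
qed

lemma ln_exp1_plus_powr_le_powr:
  fixes \<delta> k :: real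
  assumes "0 < \<delta>"
  obtains C where "0 < C" "\<And>x. 1 \<le> x \<Longrightarrow> ln (exp 1 + x) powr k \<le> C * x powr \<delta>"
proof (cases "k \<le> 0")
  case True
  have "ln (exp 1 + x) powr k \<le> 1 * x powr \<delta>" if "1 \<le> x" for x
    using that assms True ln_exp1_plus_ge_1[of x]
    by (simp add: ge_one_powr_ge_zero order_trans[OF powr_mono[of k 0]])
  with that[of 1] show ?thesis
    by simp
next
  case False
  define e where "e = \<delta> / k"
  have "0 < e"
    using assms False by (simp add: e_def)
  show ?thesis
  proof (rule that[of "(exp 1 + 1) powr \<delta> / e powr k"])
    show "0 < (exp 1 + 1) powr \<delta> / e powr k"
      using \<open>0 < e\<close> add_pos_pos[OF exp_gt_zero[of 1] zero_less_one] by simp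
    fix x :: real assume "1 \<le> x"
    have "0 < exp 1 + x"
      using \<open>1 \<le> x\<close> by (simp add: add_pos_nonneg)
    then have "e * ln (exp 1 + x) \<le> (exp 1 + x) powr e - 1"
      using ln_le_minus_one[of "(exp 1 + x) powr e"] by simp
    then have "ln (exp 1 + x) \<le> (exp 1 + x) powr e / e"
      using \<open>0 < e\<close> by (simp add: field_simps)
    also have "\<dots> \<le> ((exp 1 + 1) * x) powr e / e"
      using \<open>1 \<le> x\<close> \<open>0 < e\<close> by (intro divide_right_mono powr_mono2) (auto simp: algebra_simps)
    finally have "ln (exp 1 + x) powr k \<le> (((exp 1 + 1) * x) powr e / e) powr k"
      using ln_exp1_plus_ge_1[of x] \<open>1 \<le> x\<close> False by (intro powr_mono2) auto
    also have "\<dots> = (exp 1 + 1) powr \<delta> / e powr k * x powr \<delta>"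
      using \<open>0 < e\<close> \<open>1 \<le> x\<close> False
      by (simp add: powr_divide powr_powr powr_mult e_def add_pos_nonneg)
    finally show "ln (exp 1 + x) powr k \<le> (exp 1 + 1) powr \<delta> / e powr k * x powr \<delta>" .
  qed
qed

lemma divide_powr_eq_powr_minus_mult:
  fixes a b r :: real
  assumes "0 \<le> a" "0 < b"
  shows "(a / b) powr r = b powr (- r) * a powr r"
proof -
  have "(a / b) powr r = a powr r / b powr r"
    using assms by (simp add: powr_divide)
  then show ?thesis
    by (simp add: powr_minus divide_inverse)
qed

lemma powr_le_if_comparable:
  fixes a b M :: real
  assumes "0 < a" "0 < b" "a \<le> M * b" "b \<le> M * a"
  shows "a powr \<beta> \<le> M powr \<bar>\<beta>\<bar> * b powr \<beta>"
proof -
  have "0 < M"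
    using assms by (metis order.strict_trans2 zero_less_mult_pos2)
  show ?thesis
  proof (cases "0 \<le> \<beta>")
    case True
    then have "a powr \<beta> \<le> (M * b) powr \<beta>"
      using assms by (intro powr_mono2) auto
    then show ?thesis
      using True \<open>0 < M\<close> assms by (simp add: powr_mult)
  next
    case False
    then have "a powr \<beta> \<le> (b / M) powr \<beta>"
      using assms \<open>0 < M\<close> by (intro powr_mono2') (auto simp: divide_le_eq mult.commute)
    also have "\<dots> = M powr \<bar>\<beta>\<bar> * b powr \<beta>"
      using assms \<open>0 < M\<close> False by (simp add: divide_powr_eq_powr_minus_mult)
    finally show ?thesis .
  qed
qed

lemma ln_plus_le_ln_exp1_plus:
  fixes c s :: real
  assumes "1 < c" "0 \<le> s"
  shows "ln (c + s) \<le> (1 + ln c) * ln (exp 1 + s)"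
proof -
  have "c \<le> c * exp 1" "s \<le> c * s"
    using assms mult_right_mono[of 1 c s] by auto
  then have "c + s \<le> c * (exp 1 + s)"
    unfolding distrib_left by (rule add_mono)
  then have "ln (c + s) \<le> ln (c * (exp 1 + s))"
    using assms by (intro ln_mono) auto
  also have "\<dots> = ln c + ln (exp 1 + s)"
    using assms add_pos_nonneg[OF exp_gt_zero[of 1] assms(2)] by (simp add: ln_mult)
  also have "\<dots> \<le> (1 + ln c) * ln (exp 1 + s)"
    using assms ln_exp1_plus_ge_1[OF assms(2)] by (simp add: algebra_simps mult_le_cancel_left1)
  finally show ?thesis .
qed

lemma ln_exp1_plus_le_ln_plus:
  fixes c s :: real
  assumes "1 < c" "0 \<le> s"
  shows "ln (exp 1 + s) \<le> (1 + 1 / ln c) * ln (c + s)"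
proof -
  have "exp 1 \<le> exp 1 * c" "s \<le> exp 1 * s"
    using assms mult_right_mono[of 1 "exp 1" s] by auto
  then have "exp 1 + s \<le> exp 1 * (c + s)"
    unfolding distrib_left by (rule add_mono)
  then have "ln (exp 1 + s) \<le> ln (exp 1 * (c + s))"
    using assms add_pos_nonneg[OF exp_gt_zero[of 1] assms(2)] by (intro ln_mono) auto
  also have "\<dots> = 1 + ln (c + s)"
    using assms by (simp add: ln_mult)
  also have "\<dots> \<le> (1 + 1 / ln c) * ln (c + s)"
  proof -
    have "ln c \<le> ln (c + s)"
      using assms by simp
    then have "1 \<le> ln (c + s) / ln c"
      using assms by simp
    then show ?thesis
      by (simp add: algebra_simps)
  qed
  finally show ?thesis .
qed

lemma ln_plus_powr_comparable:
  fixes c \<beta> :: real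
  assumes "1 < c"
  obtains K where "0 < K" "\<And>s. 0 \<le> s \<Longrightarrow> ln (c + s) powr \<beta> \<le> K * ln (exp 1 + s) powr \<beta>"
    "\<And>s. 0 \<le> s \<Longrightarrow> ln (exp 1 + s) powr \<beta> \<le> K * ln (c + s) powr \<beta>"
proof -
  define M where "M = max (1 + ln c) (1 + 1 / ln c)"
  have "0 < ln c"
    using assms by simp
  have le: "ln (c + s) \<le> M * ln (exp 1 + s)" "ln (exp 1 + s) \<le> M * ln (c + s)"
    and pos: "0 < ln (c + s)" "0 < ln (exp 1 + s)" if "0 \<le> s" for s
    using ln_plus_le_ln_exp1_plus[OF assms that] ln_exp1_plus_le_ln_plus[OF assms that]
      ln_exp1_plus_ge_1[OF that] assms that
    by (auto simp: M_def intro: order_trans mult_right_mono)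
  show ?thesis
  proof (rule that[of "M powr \<bar>\<beta>\<bar>"])
    show "0 < M powr \<bar>\<beta>\<bar>"
      using \<open>0 < ln c\<close> by (simp add: M_def)
  qed (use le pos in \<open>auto intro: powr_le_if_comparable\<close>)
qed

lemma ln_exp1_plus_powr_le_of_le_sq:
  fixes s v \<beta> :: real
  assumes "\<beta> \<le> 0" "0 \<le> s" "1 \<le> v" "v \<le> s powr 2"
  shows "ln (exp 1 + s) powr \<beta> \<le> (ln (1 + exp 1) + 2) powr (- \<beta>) * ln (exp 1 + v) powr \<beta>"
proof -
  define Q :: real where "Q = ln (1 + exp 1) + 2"
  have "0 < Q"
    using ln_ge_zero[of "1 + exp 1"] by (simp add: Q_def add_nonneg_pos)
  have "1 \<le> s"
  proof (rule ccontr)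
    assume "\<not> 1 \<le> s"
    then have "s * s < 1"
      using \<open>0 \<le> s\<close> mult_left_mono[of s 1 s] by auto
    then show False
      using assms by (simp add: power2_eq_square)
  qed
  have "ln (exp 1 + v) \<le> ln (exp 1 + s powr 2)"
    using assms add_pos_nonneg[OF exp_gt_zero[of 1], of v] by (intro ln_mono) auto
  also have "\<dots> \<le> Q * ln (exp 1 + s)"
    unfolding Q_def using \<open>1 \<le> s\<close> by (rule ln_exp1_plus_powr_le) simp
  finally have "ln (exp 1 + s) powr \<beta> \<le> (ln (exp 1 + v) / Q) powr \<beta>"
    using \<open>0 < Q\<close> ln_exp1_plus_ge_1[of v] assms by (intro powr_mono2') (auto simp: field_simps)
  also have "\<dots> = Q powr (- \<beta>) * ln (exp 1 + v) powr \<beta>"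
    using \<open>0 < Q\<close> ln_exp1_plus_ge_1[of v] assms by (simp add: divide_powr_eq_powr_minus_mult)
  finally show ?thesis
    by (simp add: Q_def)
qed

lemma powr_half_le_powr_mult_ln_powr:
  fixes \<gamma> \<beta> :: real
  assumes "0 < \<gamma>"
  obtains C where "0 < C" "\<And>v. 1 \<le> v \<Longrightarrow> v powr (\<gamma> / 2) \<le> C * (v powr \<gamma> * ln (exp 1 + v) powr \<beta>)"
proof -
  obtain C where "0 < C" and C: "\<And>x. 1 \<le> x \<Longrightarrow> ln (exp 1 + x) powr (- \<beta>) \<le> C * x powr (\<gamma> / 2)"
    using ln_exp1_plus_powr_le_powr[of "\<gamma> / 2" "- \<beta>"] assms by auto
  show ?thesis
  proof (rule that[OF \<open>0 < C\<close>])
    fix v :: real assume "1 \<le> v"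
    have "v powr (\<gamma> / 2) = ln (exp 1 + v) powr (- \<beta>) * (v powr (\<gamma> / 2) * ln (exp 1 + v) powr \<beta>)"
      using ln_exp1_plus_ge_1[of v] \<open>1 \<le> v\<close> by (simp add: powr_minus)
    also have "\<dots> \<le> (C * v powr (\<gamma> / 2)) * (v powr (\<gamma> / 2) * ln (exp 1 + v) powr \<beta>)"
      using C[OF \<open>1 \<le> v\<close>] by (intro mult_right_mono) auto
    also have "\<dots> = C * (v powr \<gamma> * ln (exp 1 + v) powr \<beta>)"
      by (simp add: powr_add[symmetric] mult_ac)
    finally show "v powr (\<gamma> / 2) \<le> C * (v powr \<gamma> * ln (exp 1 + v) powr \<beta>)" .
  qed
qed

lemma powr_mult_ln_powr_le_of_le_1:
  fixes s v \<gamma> \<beta> :: real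
  assumes "0 \<le> \<gamma>" "\<beta> \<le> 0" "0 \<le> s" "s \<le> v" "v \<le> 1"
  shows "s powr \<gamma> * ln (exp 1 + s) powr \<beta> \<le> ln (exp 1 + 1) powr (- \<beta>) * (v powr \<gamma> * ln (exp 1 + v) powr \<beta>)"
proof -
  have "1 \<le> ln (exp 1 + v)"
    using assms by (intro ln_exp1_plus_ge_1) simp
  have "ln (exp 1 + s) powr \<beta> \<le> 1"
    using ln_exp1_plus_ge_1[OF \<open>0 \<le> s\<close>] assms powr_mono[of \<beta> 0 "ln (exp 1 + s)"] by simp
  then have "s powr \<gamma> * ln (exp 1 + s) powr \<beta> \<le> s powr \<gamma>"
    by (simp add: mult_left_le)
  also have "\<dots> \<le> v powr \<gamma>"
    using assms by (intro powr_mono2) auto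
  also have "\<dots> = ln (exp 1 + v) powr (- \<beta>) * (v powr \<gamma> * ln (exp 1 + v) powr \<beta>)"
    using \<open>1 \<le> ln (exp 1 + v)\<close> by (simp add: powr_minus)
  also have "\<dots> \<le> ln (exp 1 + 1) powr (- \<beta>) * (v powr \<gamma> * ln (exp 1 + v) powr \<beta>)"
    using assms \<open>1 \<le> ln (exp 1 + v)\<close> exp_ge_add_one_self[of 1]
    by (intro mult_right_mono powr_mono2 ln_mono) auto
  finally show ?thesis .
qed

lemma powr_mult_ln_powr_quasi_mono_neg:
  fixes \<gamma> \<beta> :: real
  assumes "0 < \<gamma>" "\<beta> < 0"
  obtains C where "0 < C"
    "\<And>s v. 0 \<le> s \<Longrightarrow> s \<le> v \<Longrightarrow>
       s powr \<gamma> * ln (exp 1 + s) powr \<beta> \<le> C * (v powr \<gamma> * ln (exp 1 + v) powr \<beta>)"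
proof -
  obtain C1 where "0 < C1" and C1: "\<And>v. 1 \<le> v \<Longrightarrow> v powr (\<gamma> / 2) \<le> C1 * (v powr \<gamma> * ln (exp 1 + v) powr \<beta>)"
    using powr_half_le_powr_mult_ln_powr[OF \<open>0 < \<gamma>\<close>] by metis
  define C where "C = max (ln (exp 1 + 1) powr (- \<beta>)) (max ((ln (1 + exp 1) + 2) powr (- \<beta>)) C1)"
  show ?thesis
  proof (rule that[of C])
    show "0 < C"
      using \<open>0 < C1\<close> by (simp add: C_def less_max_iff_disj)
    fix s v :: real assume "0 \<le> s" "s \<le> v"
    define F where "F x = x powr \<gamma> * ln (exp 1 + x) powr \<beta>" for x
    have F_nonneg: "0 \<le> F v"
      by (simp add: F_def)
    \<comment> \<open>for v \<le> s^2 the logarithms of s and v are comparable; for s^2 \<le> v the power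
        v^(\<gamma>/2) gained over s^\<gamma> absorbs the logarithmic loss\<close>
    consider "v \<le> 1" | "1 \<le> v" "v \<le> s powr 2" | "1 \<le> v" "s powr 2 \<le> v"
      by linarith
    then have "F s \<le> C * F v"
    proof cases
      case 1
      then have "F s \<le> ln (exp 1 + 1) powr (- \<beta>) * F v"
        unfolding F_def using assms \<open>0 \<le> s\<close> \<open>s \<le> v\<close> by (intro powr_mult_ln_powr_le_of_le_1) auto
      also have "\<dots> \<le> C * F v"
        using F_nonneg by (intro mult_right_mono) (simp_all add: C_def)
      finally show ?thesis .
    next
      case 2
      have "F s \<le> v powr \<gamma> * ((ln (1 + exp 1) + 2) powr (- \<beta>) * ln (exp 1 + v) powr \<beta>)"
        unfolding F_def using ln_exp1_plus_powr_le_of_le_sq[of \<beta> s v] 2 \<open>0 \<le> s\<close> \<open>s \<le> v\<close> assms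
        by (intro mult_mono powr_mono2) auto
      also have "\<dots> = (ln (1 + exp 1) + 2) powr (- \<beta>) * F v"
        by (simp add: F_def)
      also have "\<dots> \<le> C * F v"
        using F_nonneg by (intro mult_right_mono) (simp_all add: C_def)
      finally show ?thesis .
    next
      case 3
      have "s \<le> v powr (1 / 2)"
        using powr_mono2[of "1 / 2" "s powr 2" v] 3 \<open>0 \<le> s\<close> by (simp add: powr_powr)
      have "ln (exp 1 + s) powr \<beta> \<le> 1"
        using ln_exp1_plus_ge_1[OF \<open>0 \<le> s\<close>] assms powr_mono[of \<beta> 0 "ln (exp 1 + s)"] by simp
      then have "F s \<le> s powr \<gamma>"
        by (simp add: F_def mult_left_le)
      also have "\<dots> \<le> v powr (\<gamma> / 2)"
        using \<open>s \<le> v powr (1 / 2)\<close> \<open>0 \<le> s\<close> assms powr_mono2[of \<gamma> s "v powr (1 / 2)"]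
        by (simp add: powr_powr)
      also have "\<dots> \<le> C1 * F v"
        unfolding F_def using C1 3 by blast
      also have "\<dots> \<le> C * F v"
        using F_nonneg by (intro mult_right_mono) (simp_all add: C_def)
      finally show ?thesis .
    qed
    then show "s powr \<gamma> * ln (exp 1 + s) powr \<beta> \<le> C * (v powr \<gamma> * ln (exp 1 + v) powr \<beta>)"
      by (simp add: F_def)
  qed
qed

lemma powr_mult_ln_powr_quasi_mono:
  fixes \<gamma> \<beta> :: real
  assumes "0 \<le> \<gamma>" "0 < \<gamma> \<or> 0 \<le> \<beta>"
  obtains C where "0 < C"
    "\<And>s v. 0 \<le> s \<Longrightarrow> s \<le> v \<Longrightarrow>
       s powr \<gamma> * ln (exp 1 + s) powr \<beta> \<le> C * (v powr \<gamma> * ln (exp 1 + v) powr \<beta>)"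
proof (cases "0 \<le> \<beta>")
  case True
  have "s powr \<gamma> * ln (exp 1 + s) powr \<beta> \<le> v powr \<gamma> * ln (exp 1 + v) powr \<beta>"
    if "0 \<le> s" "s \<le> v" for s v
    using that assms True ln_exp1_plus_ge_1[of s] exp_ge_add_one_self[of 1]
    by (intro mult_mono powr_mono2 ln_mono) auto
  with that[of 1] show ?thesis
    by simp
next
  case False
  with assms powr_mult_ln_powr_quasi_mono_neg[of \<gamma> \<beta>] that show ?thesis
    by auto
qed

lemma ln_exp1_plus_threshold_le:
  fixes x p \<alpha> :: real
  assumes "1 \<le> p" "0 \<le> \<alpha>" "1 \<le> x"
  shows "ln (exp 1 + x powr (1 / p) * ln (exp 1 + x) powr (- \<alpha>)) \<le> ln (exp 1 + x)"
proof -
  have "ln (exp 1 + x) powr (- \<alpha>) \<le> 1"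
    using ln_exp1_plus_ge_1[of x] assms powr_mono[of "- \<alpha>" 0 "ln (exp 1 + x)"] by simp
  then have "x powr (1 / p) * ln (exp 1 + x) powr (- \<alpha>) \<le> x powr (1 / p)"
    by (simp add: mult_left_le)
  also have "\<dots> \<le> x powr 1"
    using assms by (intro powr_mono) auto
  finally show ?thesis
    using assms by (intro ln_mono) (auto simp: add_pos_nonneg)
qed

lemma ln_exp1_plus_le_threshold:
  fixes x p \<alpha> :: real
  assumes "0 < p" "\<alpha> \<le> 0" "1 \<le> x"
  shows "ln (exp 1 + x) \<le> (ln (1 + exp 1) + p) * ln (exp 1 + x powr (1 / p) * ln (exp 1 + x) powr (- \<alpha>))"
proof -
  define y where "y = x powr (1 / p)"
  have "1 \<le> y"
    using assms by (simp add: y_def ge_one_powr_ge_zero)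
  have "1 \<le> ln (exp 1 + x) powr (- \<alpha>)"
    using ln_exp1_plus_ge_1[of x] assms by (intro ge_one_powr_ge_zero) auto
  then have "y \<le> y * ln (exp 1 + x) powr (- \<alpha>)"
    using \<open>1 \<le> y\<close> by (simp add: mult_le_cancel_left1)
  have "ln (exp 1 + x) = ln (exp 1 + y powr p)"
    using assms by (simp add: y_def powr_powr)
  also have "\<dots> \<le> (ln (1 + exp 1) + p) * ln (exp 1 + y)"
    using \<open>1 \<le> y\<close> assms by (intro ln_exp1_plus_powr_le) auto
  also have "\<dots> \<le> (ln (1 + exp 1) + p) * ln (exp 1 + y * ln (exp 1 + x) powr (- \<alpha>))"
    using assms ln_ge_zero[of "1 + exp 1"] \<open>1 \<le> y\<close> \<open>y \<le> y * ln (exp 1 + x) powr (- \<alpha>)\<close>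
    by (intro mult_left_mono ln_mono) (auto simp: add_pos_nonneg)
  finally show ?thesis
    by (simp add: y_def)
qed

lemma ln_exp1_plus_threshold_powr_le:
  fixes p \<alpha> :: real
  assumes "1 \<le> p"
  obtains L where "0 < L" "\<And>x. 1 \<le> x \<Longrightarrow>
    ln (exp 1 + x powr (1 / p) * ln (exp 1 + x) powr (- \<alpha>)) powr (\<alpha> * p) \<le> L * ln (exp 1 + x) powr (\<alpha> * p)"
proof (cases "0 \<le> \<alpha>")
  case True
  have "ln (exp 1 + x powr (1 / p) * ln (exp 1 + x) powr (- \<alpha>)) powr (\<alpha> * p) \<le> ln (exp 1 + x) powr (\<alpha> * p)"
    if "1 \<le> x" for x
    using ln_exp1_plus_threshold_le[OF assms True that] True assms
    by (intro powr_mono2) (auto intro: order_trans[OF zero_le_one ln_exp1_plus_ge_1])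
  with that[of 1] show ?thesis
    by simp
next
  case False
  define Q where "Q = ln (1 + exp 1) + p"
  have "0 < Q"
    using assms ln_ge_zero[of "1 + exp 1"] by (simp add: Q_def add_nonneg_pos)
  show ?thesis
  proof (rule that[of "Q powr (- \<alpha> * p)"])
    fix x :: real assume "1 \<le> x"
    have "ln (exp 1 + x powr (1 / p) * ln (exp 1 + x) powr (- \<alpha>)) powr (\<alpha> * p) \<le> (ln (exp 1 + x) / Q) powr (\<alpha> * p)"
      using ln_exp1_plus_le_threshold[of p \<alpha> x] \<open>0 < Q\<close> ln_exp1_plus_ge_1[of x] \<open>1 \<le> x\<close> False assms
      by (intro powr_mono2') (auto simp: Q_def field_simps mult_nonpos_nonneg)
    also have "\<dots> = Q powr (- \<alpha> * p) * ln (exp 1 + x) powr (\<alpha> * p)"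
      using \<open>0 < Q\<close> ln_exp1_plus_ge_1[of x] \<open>1 \<le> x\<close> by (simp add: divide_powr_eq_powr_minus_mult)
    finally show "ln (exp 1 + x powr (1 / p) * ln (exp 1 + x) powr (- \<alpha>)) powr (\<alpha> * p)
        \<le> Q powr (- \<alpha> * p) * ln (exp 1 + x) powr (\<alpha> * p)" .
  qed (use \<open>0 < Q\<close> in simp)
qed

section \<open>The L log L Young function\<close>

definition LlogL_density :: "real \<Rightarrow> real \<Rightarrow> real \<Rightarrow> real \<Rightarrow> real" where
  "LlogL_density p \<alpha> c s = s powr (p - 1) * ln (c + s) powr (\<alpha> * p)"

lemma LlogL_Phi_eq_integral: "LlogL_Phi p \<alpha> c t = integral {0..t} (LlogL_density p \<alpha> c)"
  unfolding LlogL_Phi_def LlogL_density_def ..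

lemma LlogL_density_integrable_on:
  assumes "1 < p" "1 < c" "0 \<le> u"
  shows "LlogL_density p \<alpha> c integrable_on {u..v}"
proof (rule integrable_continuous_real)
  have "continuous_on {0..} (LlogL_density p \<alpha> c)"
    unfolding LlogL_density_def using assms
    by (intro continuous_intros continuous_on_powr') auto
  then show "continuous_on {u..v} (LlogL_density p \<alpha> c)"
    by (rule continuous_on_subset) (use assms in auto)
qed

lemma LlogL_Phi_le:
  assumes "1 < p" "1 < c" "0 \<le> v" "\<And>s. 0 \<le> s \<Longrightarrow> s \<le> v \<Longrightarrow> LlogL_density p \<alpha> c s \<le> B"
  shows "LlogL_Phi p \<alpha> c v \<le> B * v"
proof -
  have "integral {0..v} (LlogL_density p \<alpha> c) \<le> integral {0..v} (\<lambda>_. B)"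
    using assms by (intro integral_le LlogL_density_integrable_on) auto
  then show ?thesis
    using assms(3) by (simp add: LlogL_Phi_eq_integral mult.commute)
qed

lemma LlogL_Phi_ge:
  assumes "1 < p" "1 < c" "0 \<le> u" "u \<le> v" "\<And>s. u \<le> s \<Longrightarrow> s \<le> v \<Longrightarrow> B \<le> LlogL_density p \<alpha> c s"
  shows "B * (v - u) \<le> LlogL_Phi p \<alpha> c v"
proof -
  have "B * (v - u) = integral {u..v} (\<lambda>_. B)"
    using assms(4) by (simp add: mult.commute)
  also have "\<dots> \<le> integral {u..v} (LlogL_density p \<alpha> c)"
    using assms by (intro integral_le LlogL_density_integrable_on) auto
  also have "\<dots> \<le> integral {0..u} (LlogL_density p \<alpha> c) + integral {u..v} (LlogL_density p \<alpha> c)"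
    using assms by (intro add_increasing integral_nonneg LlogL_density_integrable_on)
      (auto simp: LlogL_density_def)
  also have "\<dots> = LlogL_Phi p \<alpha> c v"
    unfolding LlogL_Phi_eq_integral using assms
    by (intro Henstock_Kurzweil_Integration.integral_combine LlogL_density_integrable_on) auto
  finally show ?thesis .
qed

lemma LlogL_Phi_le_powr:
  assumes "1 < p" "1 < c"
  obtains K where "0 < K"
    "\<And>v. 0 \<le> v \<Longrightarrow> LlogL_Phi p \<alpha> c v \<le> K * (v powr p * ln (exp 1 + v) powr (\<alpha> * p))"
proof -
  obtain K where "0 < K" and K: "\<And>s. 0 \<le> s \<Longrightarrow> ln (c + s) powr (\<alpha> * p) \<le> K * ln (exp 1 + s) powr (\<alpha> * p)"
    using ln_plus_powr_comparable[OF assms(2)] by metis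
  obtain C where "0 < C" and C: "\<And>s v. 0 \<le> s \<Longrightarrow> s \<le> v \<Longrightarrow>
      s powr (p - 1) * ln (exp 1 + s) powr (\<alpha> * p) \<le> C * (v powr (p - 1) * ln (exp 1 + v) powr (\<alpha> * p))"
    using powr_mult_ln_powr_quasi_mono[of "p - 1" "\<alpha> * p"] assms(1) by auto
  show ?thesis
  proof (rule that[of "K * C"])
    show "0 < K * C"
      using \<open>0 < K\<close> \<open>0 < C\<close> by simp
    fix v :: real assume "0 \<le> v"
    have "LlogL_Phi p \<alpha> c v \<le> (K * C * (v powr (p - 1) * ln (exp 1 + v) powr (\<alpha> * p))) * v"
    proof (rule LlogL_Phi_le[OF assms \<open>0 \<le> v\<close>])
      fix s :: real assume "0 \<le> s" "s \<le> v"
      have "LlogL_density p \<alpha> c s \<le> K * (s powr (p - 1) * ln (exp 1 + s) powr (\<alpha> * p))"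
        unfolding LlogL_density_def using mult_left_mono[OF K[OF \<open>0 \<le> s\<close>], of "s powr (p - 1)"]
        by (simp add: mult.left_commute)
      also have "\<dots> \<le> K * C * (v powr (p - 1) * ln (exp 1 + v) powr (\<alpha> * p))"
        using C[OF \<open>0 \<le> s\<close> \<open>s \<le> v\<close>] \<open>0 < K\<close> by (simp add: mult_left_mono mult.assoc)
      finally show "LlogL_density p \<alpha> c s \<le> K * C * (v powr (p - 1) * ln (exp 1 + v) powr (\<alpha> * p))" .
    qed
    also have "\<dots> = K * C * (v powr p * ln (exp 1 + v) powr (\<alpha> * p))"
      using \<open>0 \<le> v\<close> powr_add[of v "p - 1" 1] by (simp add: mult_ac)
    finally show "LlogL_Phi p \<alpha> c v \<le> K * C * (v powr p * ln (exp 1 + v) powr (\<alpha> * p))" .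
  qed
qed

lemma LlogL_density_ge_linear:
  assumes "2 < p \<or> (p = 2 \<and> 0 \<le> \<alpha>)" "1 < c"
  obtains m where "0 < m" "\<And>s. 1 \<le> s \<Longrightarrow> m * s \<le> LlogL_density p \<alpha> c s"
proof -
  obtain K where "0 < K" and K: "\<And>s. 0 \<le> s \<Longrightarrow> ln (exp 1 + s) powr (\<alpha> * p) \<le> K * ln (c + s) powr (\<alpha> * p)"
    using ln_plus_powr_comparable[OF assms(2)] by metis
  obtain C where "0 < C" and C: "\<And>s v. 0 \<le> s \<Longrightarrow> s \<le> v \<Longrightarrow>
      s powr (p - 2) * ln (exp 1 + s) powr (\<alpha> * p) \<le> C * (v powr (p - 2) * ln (exp 1 + v) powr (\<alpha> * p))"
  proof (rule powr_mult_ln_powr_quasi_mono)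
    show "0 \<le> p - 2" "0 < p - 2 \<or> 0 \<le> \<alpha> * p"
      using assms(1) by auto
  qed blast
  show ?thesis
  proof (rule that[of "ln (exp 1 + 1) powr (\<alpha> * p) / (C * K)"])
    show "0 < ln (exp 1 + 1) powr (\<alpha> * p) / (C * K)"
      using \<open>0 < C\<close> \<open>0 < K\<close> by (simp add: add_pos_pos)
    fix s :: real assume "1 \<le> s"
    have "ln (exp 1 + 1) powr (\<alpha> * p) \<le> C * (s powr (p - 2) * ln (exp 1 + s) powr (\<alpha> * p))"
      using C[of 1 s] \<open>1 \<le> s\<close> by simp
    also have "\<dots> \<le> C * (s powr (p - 2) * (K * ln (c + s) powr (\<alpha> * p)))"
      using K[of s] \<open>1 \<le> s\<close> \<open>0 < C\<close> by (intro mult_left_mono) auto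
    finally have "ln (exp 1 + 1) powr (\<alpha> * p) / (C * K) \<le> s powr (p - 2) * ln (c + s) powr (\<alpha> * p)"
      using \<open>0 < C\<close> \<open>0 < K\<close> by (simp add: divide_le_eq mult_ac)
    then have "ln (exp 1 + 1) powr (\<alpha> * p) / (C * K) * s \<le> (s powr (p - 2) * ln (c + s) powr (\<alpha> * p)) * s"
      using \<open>1 \<le> s\<close> by (intro mult_right_mono) auto
    also have "\<dots> = LlogL_density p \<alpha> c s"
      using \<open>1 \<le> s\<close> powr_add[of s "p - 2" 1] by (simp add: LlogL_density_def mult_ac)
    finally show "ln (exp 1 + 1) powr (\<alpha> * p) / (C * K) * s \<le> LlogL_density p \<alpha> c s" .
  qed
qed

lemma LlogL_Phi_ge_quadratic:
  assumes "2 < p \<or> (p = 2 \<and> 0 \<le> \<alpha>)" "1 < c"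
  obtains a where "0 < a" "\<And>t. 0 \<le> t \<Longrightarrow> a * (t\<^sup>2 - 4) \<le> LlogL_Phi p \<alpha> c t"
proof -
  have "1 < p"
    using assms(1) by auto
  obtain m where "0 < m" and density_ge: "\<And>s. 1 \<le> s \<Longrightarrow> m * s \<le> LlogL_density p \<alpha> c s"
    using LlogL_density_ge_linear[OF assms] by metis
  show ?thesis
  proof (rule that[of "m / 4"])
    fix t :: real assume "0 \<le> t"
    show "m / 4 * (t\<^sup>2 - 4) \<le> LlogL_Phi p \<alpha> c t"
    proof (cases "2 \<le> t")
      case True
      have "m * (t / 2) * (t - t / 2) \<le> LlogL_Phi p \<alpha> c t"
      proof (rule LlogL_Phi_ge[OF \<open>1 < p\<close> assms(2)])
        fix s assume "t / 2 \<le> s" "s \<le> t"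
        then have "m * (t / 2) \<le> m * s"
          using \<open>0 < m\<close> by simp
        also have "\<dots> \<le> LlogL_density p \<alpha> c s"
          using True \<open>t / 2 \<le> s\<close> by (intro density_ge) simp
        finally show "m * (t / 2) \<le> LlogL_density p \<alpha> c s" .
      qed (use True in auto)
      then show ?thesis
        using \<open>0 < m\<close> by (simp add: power2_eq_square field_simps)
    next
      case False
      have "0 * (t - t) \<le> LlogL_Phi p \<alpha> c t"
        by (rule LlogL_Phi_ge[OF \<open>1 < p\<close> assms(2) \<open>0 \<le> t\<close>]) (auto simp: LlogL_density_def)
      moreover have "t\<^sup>2 \<le> 2\<^sup>2"
        using False \<open>0 \<le> t\<close> by (intro power_mono) auto
      then have "m / 4 * (t\<^sup>2 - 4) \<le> 0"
        using \<open>0 < m\<close> by (intro mult_nonneg_nonpos) auto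
      ultimately show ?thesis
        by simp
    qed
  qed (use \<open>0 < m\<close> in simp)
qed

lemma threshold_powr_mult_ln_powr:
  fixes x l p \<alpha> :: real
  assumes "0 < x" "0 < l" "0 < p"
  shows "(x powr (1 / p) * l powr (- \<alpha>)) powr (p - 2) * l powr (\<alpha> * p) = x powr (1 - 2 / p) * l powr (2 * \<alpha>)"
proof -
  have "(x powr (1 / p) * l powr (- \<alpha>)) powr (p - 2) = x powr (1 / p * (p - 2)) * l powr (- \<alpha> * (p - 2))"
    using assms by (simp add: powr_mult powr_powr)
  moreover have "1 / p * (p - 2) = 1 - 2 / p"
    using assms by (simp add: field_simps)
  moreover have "l powr (- \<alpha> * (p - 2)) * l powr (\<alpha> * p) = l powr (2 * \<alpha>)"
    by (simp add: powr_add[symmetric] algebra_simps)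
  ultimately show ?thesis
    by (simp add: mult.assoc)
qed

lemma LlogL_Phi_le_quadratic:
  assumes "2 < p \<or> (p = 2 \<and> 0 \<le> \<alpha>)" "1 < c"
  obtains M where "0 < M" "\<And>x v. 1 \<le> x \<Longrightarrow> 0 \<le> v \<Longrightarrow> v \<le> x powr (1 / p) * ln (exp 1 + x) powr (- \<alpha>) \<Longrightarrow>
      LlogL_Phi p \<alpha> c v \<le> M * (x powr (1 - 2 / p) * ln (exp 1 + x) powr (2 * \<alpha>)) * v\<^sup>2"
proof -
  have "1 < p"
    using assms(1) by auto
  obtain K where "0 < K"
    and K: "\<And>v. 0 \<le> v \<Longrightarrow> LlogL_Phi p \<alpha> c v \<le> K * (v powr p * ln (exp 1 + v) powr (\<alpha> * p))"
    using LlogL_Phi_le_powr[OF \<open>1 < p\<close> assms(2)] by metis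
  obtain C where "0 < C" and C: "\<And>s v. 0 \<le> s \<Longrightarrow> s \<le> v \<Longrightarrow>
      s powr (p - 2) * ln (exp 1 + s) powr (\<alpha> * p) \<le> C * (v powr (p - 2) * ln (exp 1 + v) powr (\<alpha> * p))"
  proof (rule powr_mult_ln_powr_quasi_mono)
    show "0 \<le> p - 2" "0 < p - 2 \<or> 0 \<le> \<alpha> * p"
      using assms(1) by auto
  qed blast
  obtain L where "0 < L" and L: "\<And>x. 1 \<le> x \<Longrightarrow>
      ln (exp 1 + x powr (1 / p) * ln (exp 1 + x) powr (- \<alpha>)) powr (\<alpha> * p) \<le> L * ln (exp 1 + x) powr (\<alpha> * p)"
    using ln_exp1_plus_threshold_powr_le[of p] \<open>1 < p\<close> by (metis less_imp_le)
  show ?thesis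
  proof (rule that[of "K * C * L"])
    show "0 < K * C * L"
      using \<open>0 < K\<close> \<open>0 < C\<close> \<open>0 < L\<close> by simp
    fix x v :: real
    assume "1 \<le> x" "0 \<le> v" and v_le: "v \<le> x powr (1 / p) * ln (exp 1 + x) powr (- \<alpha>)"
    define l where "l = ln (exp 1 + x)"
    define s0 where "s0 = x powr (1 / p) * l powr (- \<alpha>)"
    have "1 \<le> l"
      unfolding l_def using \<open>1 \<le> x\<close> by (intro ln_exp1_plus_ge_1) simp
    have "LlogL_Phi p \<alpha> c v \<le> K * (v powr (p - 2) * ln (exp 1 + v) powr (\<alpha> * p)) * v\<^sup>2"
      using K[OF \<open>0 \<le> v\<close>] \<open>0 \<le> v\<close> powr_add[of v "p - 2" 2] by (simp add: mult_ac)
    also have "\<dots> \<le> K * (C * (s0 powr (p - 2) * ln (exp 1 + s0) powr (\<alpha> * p))) * v\<^sup>2"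
      using C[OF \<open>0 \<le> v\<close>, of s0] v_le \<open>0 < K\<close>
      by (intro mult_right_mono mult_left_mono) (auto simp: s0_def l_def)
    also have "\<dots> \<le> K * (C * (s0 powr (p - 2) * (L * l powr (\<alpha> * p)))) * v\<^sup>2"
      using L[OF \<open>1 \<le> x\<close>] \<open>0 < K\<close> \<open>0 < C\<close>
      by (intro mult_right_mono mult_left_mono) (auto simp: s0_def l_def)
    also have "\<dots> = K * C * L * (s0 powr (p - 2) * l powr (\<alpha> * p)) * v\<^sup>2"
      by (simp add: mult_ac)
    also have "\<dots> = K * C * L * (x powr (1 - 2 / p) * l powr (2 * \<alpha>)) * v\<^sup>2"
      using \<open>1 \<le> x\<close> \<open>1 \<le> l\<close> \<open>1 < p\<close> by (simp only: s0_def threshold_powr_mult_ln_powr)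
    finally show "LlogL_Phi p \<alpha> c v \<le> K * C * L * (x powr (1 - 2 / p) * ln (exp 1 + x) powr (2 * \<alpha>)) * v\<^sup>2"
      by (simp add: l_def)
  qed
qed

lemma
  fixes x l p \<alpha> K M :: real
  assumes "1 \<le> x" "0 < l" "0 < K"
  defines "B \<equiv> sqrt (K * max 1 M) * x powr (1/2 - 1/p) * l powr \<alpha>"
  shows sqrt_le_scale_mult_threshold: "sqrt (x * K) \<le> B * (x powr (1 / p) * l powr (- \<alpha>))"
    and mult_le_scale_squared: "M * (x powr (1 - 2 / p) * l powr (2 * \<alpha>)) * K \<le> B\<^sup>2"
proof -
  have "x powr (1/2 - 1/p) * x powr (1 / p) = sqrt x" "l powr \<alpha> * l powr (- \<alpha>) = 1"
    using assms by (simp_all add: powr_half_sqrt flip: powr_add)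
  then have "sqrt (K * max 1 M) * sqrt x = B * (x powr (1 / p) * l powr (- \<alpha>))"
    by (simp add: B_def mult_ac)
  have "sqrt (x * K) \<le> sqrt (K * max 1 M) * sqrt x"
    using assms by (simp add: real_sqrt_mult mult.commute mult_right_mono)
  also have "\<dots> = B * (x powr (1 / p) * l powr (- \<alpha>))"
    by fact
  finally show "sqrt (x * K) \<le> B * (x powr (1 / p) * l powr (- \<alpha>))" .
  have "B\<^sup>2 = K * max 1 M * (x powr (1 - 2 / p) * l powr (2 * \<alpha>))"
    using assms by (simp add: B_def power_mult_distrib power2_eq_square mult_ac flip: powr_add)
  then show "M * (x powr (1 - 2 / p) * l powr (2 * \<alpha>)) * K \<le> B\<^sup>2"
    using assms by (simp add: mult_ac mult_right_mono)
qed

theorem lemma5p4: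
  fixes p \<alpha> c :: real
  assumes "2 < p \<or> (p = 2 \<and> \<alpha> \<ge> 0)"
    and "c > 1"
    and "young_function (LlogL_Phi p \<alpha> c)"
  shows "\<exists>C>0. \<forall>N::nat. N \<ge> 1 \<longrightarrow>
     (\<forall>A::int set. finite A \<and> card A \<le> N \<longrightarrow>
       (\<forall>g\<in>orlicz_space (LlogL_Phi p \<alpha> c).
          luxemburg_norm (LlogL_Phi p \<alpha> c) (fourier_proj A g)
            \<le> C * real N powr (1/2 - 1/p) * (ln (exp 1 + real N)) powr \<alpha>
                * luxemburg_norm (LlogL_Phi p \<alpha> c) g))"
proof -
  obtain a where "0 < a" and quadratic: "\<And>t. 0 \<le> t \<Longrightarrow> a * (t\<^sup>2 - 4) \<le> LlogL_Phi p \<alpha> c t"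
    using LlogL_Phi_ge_quadratic[OF assms(1,2)] by metis
  obtain M where "0 < M" and M: "\<And>x v. 1 \<le> x \<Longrightarrow> 0 \<le> v \<Longrightarrow> v \<le> x powr (1 / p) * ln (exp 1 + x) powr (- \<alpha>) \<Longrightarrow>
      LlogL_Phi p \<alpha> c v \<le> M * (x powr (1 - 2 / p) * ln (exp 1 + x) powr (2 * \<alpha>)) * v\<^sup>2"
    using LlogL_Phi_le_quadratic[OF assms(1,2)] by metis
  define K where "K = 1 / a + 8 * pi"
  have "0 < K"
    using \<open>0 < a\<close> by (simp add: K_def add_pos_pos)
  have "luxemburg_norm (LlogL_Phi p \<alpha> c) (fourier_proj A g) \<le> sqrt (K * max 1 M) * real N powr (1/2 - 1/p)
      * ln (exp 1 + real N) powr \<alpha> * luxemburg_norm (LlogL_Phi p \<alpha> c) g"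
    if "1 \<le> real N" "finite A" "card A \<le> N" "g \<in> orlicz_space (LlogL_Phi p \<alpha> c)" for N A g
  proof (rule luxemburg_norm_fourier_proj_le[OF assms(3) \<open>0 < a\<close> quadratic that(2,3) _ _ M[OF that(1)] _ _ that(4)])
    show "sqrt (real N * (1 / a + 8 * pi)) \<le> sqrt (K * max 1 M) * real N powr (1/2 - 1/p)
        * ln (exp 1 + real N) powr \<alpha> * (real N powr (1 / p) * ln (exp 1 + real N) powr (- \<alpha>))"
      using sqrt_le_scale_mult_threshold[OF that(1) _ \<open>0 < K\<close>] ln_exp1_plus_ge_1[of "real N"] by (simp add: K_def)
    show "M * (real N powr (1 - 2 / p) * ln (exp 1 + real N) powr (2 * \<alpha>)) * (1 / a + 8 * pi)
        \<le> (sqrt (K * max 1 M) * real N powr (1/2 - 1/p) * ln (exp 1 + real N) powr \<alpha>)\<^sup>2"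
      using mult_le_scale_squared[OF that(1) _ \<open>0 < K\<close>] ln_exp1_plus_ge_1[of "real N"] by (simp add: K_def)
  qed (use \<open>0 < K\<close> \<open>0 < M\<close> that(1) ln_exp1_plus_ge_1[of "real N"] in auto)
  then show ?thesis
    using \<open>0 < K\<close> by (intro exI[of _ "sqrt (K * max 1 M)"]) auto
qed

end
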